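(* Let $\mathcal T,\mathcal S$ be sets, $N\ge1$ an integer, $0<\delta<1\le M$, and $\tau:\mathcal T\to(0,M]$, $\sigma:\mathcal S\to(0,M]$ functions. (1) Suppose that for all integers $k\ge N$ and $\ell\ge1$, $$\#\tau^{-1}([\delta^{k+\ell},\delta^k))\le\#\sigma^{-1}([\delta^{k+\ell+1},\delta^{k-1}))\quad\text{and}\quad \#\sigma^{-1}([\delta^{k+\ell},\delta^k))\le\#\tau^{-1}([\delta^{k+\ell+1},\delta^{k-1})).$$ Then there is $\delta'>0$ such that one of the following holds: (i) there is a bijection $\eta:\mathcal T\to\mathcal S$ with $\delta'\le \tau(t)/\sigma(\eta(t))\le 1/\delta'$ for all $t\in\mathcal T$; (ii) for some set $\mathcal I$ (disjoint from $\mathcal T$), extending $\tau$ to $\mathcal T\cup\mathcal I$ by $\tau(t)=1$ for $t\in\mathcal I$, there is a bijection $\eta:\mathcal T\cup\mathcal I\to\mathcal S$ with $\delta'\le \tau(t)/\sigma(\eta(t))\le 1/\delta'$ for all $t\in\mathcal T\cup\mathcal I$; (iii) for some set $\mathcal I$ (disjoint from $\mathcal S$), extending $\sigma$ to $\mathcal S\cup\mathcal I$ by $\sigma(s)=1$ for $s\in\mathcal I$, there is a bijection $\eta:\mathcal T\to\mathcal S\cup\mathcal I$ with $\delta'\le \tau(t)/\sigma(\eta(t))\le 1/\delta'$ for all $t\in\mathcal T$. (2) If the two displayed inequalities hold for all integers $k\in\mathbb Z$ (and all $\ell\ge1$), then alternative (i) holds for some $\delta'>0$.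
   Context: $\#$ denotes cardinality (possibly infinite). *)

theory Defs
  imports Complex_Main "HOL-Library.Equipollence"
begin

text \<open>Preimage of the half-open interval [a,b) under f, restricted to the domain A.
  Cardinality comparison #X \<le> #Y (possibly infinite) is rendered by lepoll X Y.\<close>

definition lvl :: "('x \<Rightarrow> real) \<Rightarrow> 'x set \<Rightarrow> real \<Rightarrow> real \<Rightarrow> 'x set" where
  "lvl f A a b = {x \<in> A. a \<le> f x \<and> f x < b}"

end

theory Submission
  imports Defs
begin

text \<open>Let \<open>level \<delta> x\<close> be the integer \<open>n\<close> with \<open>\<delta>^(n+1) \<le> x < \<delta>^n\<close>.  The hypothesis says that
  each block of consecutive \<open>\<tau>\<close>-levels \<open>k..m\<close> (with \<open>k \<ge> N\<close>) is no larger than the block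
  \<open>k-1..m+1\<close> of \<open>\<sigma>\<close>-levels, and vice versa.  Treating the levels of \<open>T\<close> from the bottom up and
  matching each one greedily into the lowest free \<open>\<sigma>\<close>-slots of levels \<open>j-1\<close>, \<open>j\<close>, \<open>j+1\<close> yields an
  injection that moves levels by at most one; infinite levels are absorbed by cardinal arithmetic.
  Two such injections, one in each direction, are merged by Banach's decomposition into a
  bijection between sets that contain every element of level \<open>\<ge> N\<close>, and it changes values by a
  factor of at most \<open>\<delta>^(-2)\<close>.  All remaining elements have values in \<open>[\<delta>^N, M]\<close>, so they can be
  paired arbitrarily, padding the smaller side with dummies of value 1.  If the hypothesis holds on
  all levels, the starting level can be taken below every element and nothing is left over.\<close>

unbundle cardinal_syntax

section \<open>Cardinal arithmetic\<close>

lemma lepoll_finite: "A \<lesssim> B \<Longrightarrow> finite B \<Longrightarrow> finite A"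
  unfolding lepoll_def using inj_on_finite by blast

lemma lepoll_total: "A \<lesssim> B \<or> B \<lesssim> A"
  using ordLeq_total[OF card_of_Well_order card_of_Well_order, of A B]
  by (simp add: lepoll_def card_of_ordLeq[symmetric])

lemma Un_lepoll_infinite:
  assumes "infinite Y" "X \<lesssim> Y"
  shows "X \<union> Y \<lesssim> Y"
proof -
  have "|X| \<le>o |Y|" using assms(2) by (simp add: lepoll_def card_of_ordLeq[symmetric])
  then have "|X <+> Y| =o |Y|" using card_of_Plus_infinite2[OF assms(1)] by blast
  then have "|X \<union> Y| \<le>o |Y|" using card_of_Un_Plus_ordLeq ordLeq_ordIso_trans by blast
  then show ?thesis by (simp add: lepoll_def card_of_ordLeq[symmetric])
qed

lemma infinite_lepoll_UnD:
  assumes "infinite A" "A \<lesssim> X \<union> Y"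
  shows "A \<lesssim> X \<or> A \<lesssim> Y"
proof -
  have "A \<lesssim> Y" if "X \<lesssim> Y" "A \<lesssim> X \<union> Y" for X Y :: "'b set"
  proof -
    have "infinite Y" using that assms(1) lepoll_finite finite_UnI by metis
    then show ?thesis using that Un_lepoll_infinite lepoll_trans by blast
  qed
  then show ?thesis using lepoll_total assms(2) by (metis sup_commute)
qed

lemma infinite_split_eqpoll:
  assumes "infinite Y"
  obtains Y1 Y2 where "Y1 \<inter> Y2 = {}" "Y1 \<union> Y2 = Y" "Y1 \<approx> Y" "Y2 \<approx> Y"
proof -
  have "|Y <+> Y| =o |Y|"
    using card_of_Plus_infinite1[OF assms] card_of_refl ordIso_iff_ordLeq by blast
  then obtain b where b: "bij_betw b (Y <+> Y) Y" using card_of_ordIso by blast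
  then have inj: "inj_on b (Y <+> Y)" by (simp add: bij_betw_def)
  have "(b \<circ> Inl) ` Y \<approx> Y"
    by (rule inj_on_image_eqpoll_self) (auto intro!: inj_onI dest: inj_onD[OF inj])
  moreover have "(b \<circ> Inr) ` Y \<approx> Y"
    by (rule inj_on_image_eqpoll_self) (auto intro!: inj_onI dest: inj_onD[OF inj])
  moreover have "(b \<circ> Inl) ` Y \<inter> (b \<circ> Inr) ` Y = {}"
    using inj by (auto simp: inj_on_def)
  moreover have "(b \<circ> Inl) ` Y \<union> (b \<circ> Inr) ` Y = Y"
    using b by (auto simp: bij_betw_def Plus_def image_Un image_comp)
  ultimately show ?thesis using that by blast
qed

lemma infinite_lepoll_spare:
  assumes "infinite A" "A \<lesssim> Y"
  obtains g where "inj_on g A" "g ` A \<subseteq> Y" "Y \<lesssim> Y - g ` A"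
proof -
  have "infinite Y" using assms lepoll_finite by blast
  then obtain Y1 Y2 where Y: "Y1 \<inter> Y2 = {}" "Y1 \<union> Y2 = Y" "Y1 \<approx> Y" "Y2 \<approx> Y"
    by (rule infinite_split_eqpoll)
  have "A \<lesssim> Y1" by (rule lepoll_trans2[OF assms(2) eqpoll_sym[OF Y(3)]])
  then obtain g where g: "inj_on g A" "g ` A \<subseteq> Y1" unfolding lepoll_def by blast
  have "Y2 \<subseteq> Y - g ` A" using g Y by blast
  then have "Y \<lesssim> Y - g ` A" by (rule lepoll_trans1[OF eqpoll_sym[OF Y(4)] subset_imp_lepoll])
  then show ?thesis using that g Y by blast
qed

lemma lepoll_cancel_finite:
  assumes "finite A" "A \<approx> B" "A \<inter> X = {}" "B \<inter> Y = {}" "A \<union> X \<lesssim> B \<union> Y"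
  shows "X \<lesssim> Y"
proof -
  have fB: "finite B" using assms(1,2) eqpoll_finite_iff by blast
  show ?thesis
  proof (cases "finite Y")
    case False
    have "X \<lesssim> B \<union> Y" using assms(5) subset_imp_lepoll lepoll_trans by (metis Un_upper2)
    also have "B \<union> Y \<lesssim> Y" using Un_lepoll_infinite[OF False finite_lepoll_infinite[OF False fB]] .
    finally show ?thesis .
  next
    case True
    then have fX: "finite X" using assms(5) fB lepoll_finite by blast
    have "card A + card X = card (A \<union> X)" using assms(1,3) fX by (simp add: card_Un_disjoint)
    also have "\<dots> \<le> card (B \<union> Y)" using assms(1,5) fX fB True by (simp add: lepoll_iff_card_le)
    also have "\<dots> = card B + card Y" using assms(4) fB True by (simp add: card_Un_disjoint)
    finally have "card X \<le> card Y" using assms(1,2) fB by (simp add: eqpoll_iff_card)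
    then show ?thesis using fX True by (simp add: lepoll_iff_card_le)
  qed
qed

lemma finite_lepoll_fill:
  assumes "finite A" "A \<lesssim> C \<union> D" "finite C" "card C \<le> card A" "C \<inter> D = {}"
  obtains Q where "Q \<subseteq> D" "A \<approx> C \<union> Q"
proof -
  obtain Q where Q: "Q \<subseteq> D" "finite Q" "card Q = card A - card C"
  proof (cases "finite D")
    case True
    have "card A \<le> card (C \<union> D)" using assms(1-3) True by (simp add: lepoll_iff_card_le)
    also have "\<dots> = card C + card D" using assms(3,5) True by (simp add: card_Un_disjoint)
    finally have "card A - card C \<le> card D" by simp
    then show ?thesis using obtain_subset_with_card_n that by metis
  next
    case False
    then show ?thesis using infinite_arbitrarily_large that by metis
  qed
  have "card (C \<union> Q) = card A" using Q assms(3-5) by (subst card_Un_disjoint) auto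
  then have "A \<approx> C \<union> Q" using assms(1,3) Q(2) by (simp add: eqpoll_iff_card)
  with Q(1) that show ?thesis by blast
qed

lemma lepoll_Un_spare:
  assumes "V \<lesssim> Y \<union> Z" "Y \<lesssim> Y'" "Y' \<subseteq> Y" "Y \<inter> Z = {}"
  shows "V \<lesssim> Y' \<union> Z"
proof -
  have "Y \<union> Z \<lesssim> Y' \<union> Z"
    using Un_lepoll_mono[OF assms(2) lepoll_refl] assms(3,4) by (auto simp: disjnt_def)
  with assms(1) show ?thesis by (rule lepoll_trans)
qed

section \<open>Greedy matching of layers\<close>

definition layers :: "'x set \<Rightarrow> ('x \<Rightarrow> int) \<Rightarrow> int \<Rightarrow> int \<Rightarrow> 'x set" where
  "layers A p a b = {x \<in> A. a \<le> p x \<and> p x \<le> b}"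

lemma layers_disjoint: "b < c \<Longrightarrow> layers A p a b \<inter> layers A p c d = {}"
  by (auto simp: layers_def)

lemma layers_mono: "a \<le> c \<Longrightarrow> d \<le> b \<Longrightarrow> layers A p c d \<subseteq> layers A p a b"
  by (auto simp: layers_def)

locale layer_domination =
  fixes T :: "'a set" and S :: "'b set" and p :: "'a \<Rightarrow> int" and q :: "'b \<Rightarrow> int" and j0 :: int
  assumes dominated: "j0 \<le> k \<Longrightarrow> k \<le> m \<Longrightarrow> layers T p k m \<lesssim> layers S q (k - 1) (m + 1)"
begin

text \<open>The layers of \<open>T\<close> are matched greedily from \<open>j0\<close> upwards.  When layer \<open>j\<close> is about to be
  treated, \<open>R0\<close> and \<open>R1\<close> are the still unused elements of the \<open>S\<close>-layers \<open>j - 1\<close> and \<open>j\<close>, the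
  \<open>S\<close>-layers above \<open>j\<close> are untouched, and every block of remaining \<open>T\<close>-layers still fits.\<close>

definition admissible :: "int \<Rightarrow> 'b set \<Rightarrow> 'b set \<Rightarrow> bool" where
  "admissible j R0 R1 \<longleftrightarrow> R0 \<subseteq> layers S q (j - 1) (j - 1) \<and> R1 \<subseteq> layers S q j j
     \<and> (\<forall>m\<ge>j. layers T p j m \<lesssim> R0 \<union> R1 \<union> layers S q (j + 1) (m + 1))
     \<and> (\<forall>m\<ge>j + 1. layers T p (j + 1) m \<lesssim> R1 \<union> layers S q (j + 1) (m + 1))"

definition greedy_choice :: "int \<Rightarrow> 'b set \<Rightarrow> 'b set \<Rightarrow> ('a \<Rightarrow> 'b) \<Rightarrow> bool" where
  "greedy_choice j R0 R1 g \<longleftrightarrow> inj_on g (layers T p j j)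
     \<and> g ` layers T p j j \<subseteq> R0 \<union> R1 \<union> layers S q (j + 1) (j + 1)
     \<and> admissible (j + 1) (R1 - g ` layers T p j j) (layers S q (j + 1) (j + 1) - g ` layers T p j j)"

lemma admissible_start: "admissible j0 (layers S q (j0 - 1) (j0 - 1)) (layers S q j0 j0)"
proof -
  have "layers T p j0 m \<lesssim> layers S q (j0 - 1) (j0 - 1) \<union> layers S q j0 j0 \<union> layers S q (j0 + 1) (m + 1)"
    if "j0 \<le> m" for m
  proof -
    have "layers S q (j0 - 1) (m + 1)
        = layers S q (j0 - 1) (j0 - 1) \<union> layers S q j0 j0 \<union> layers S q (j0 + 1) (m + 1)"
      using that by (auto simp: layers_def)
    then show ?thesis using dominated[OF order_refl that] by simp
  qed
  moreover have "layers T p (j0 + 1) m \<lesssim> layers S q j0 j0 \<union> layers S q (j0 + 1) (m + 1)"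
    if "j0 + 1 \<le> m" for m
  proof -
    have "layers S q j0 (m + 1) = layers S q j0 j0 \<union> layers S q (j0 + 1) (m + 1)"
      using that by (auto simp: layers_def)
    then show ?thesis using dominated[of "j0 + 1" m] that by simp
  qed
  ultimately show ?thesis unfolding admissible_def by (auto simp: layers_def)
qed

end

locale greedy_step = layer_domination +
  fixes j :: int and R0 R1 :: "'b set"
  assumes j0_le: "j0 \<le> j" and admissible: "admissible j R0 R1"
begin

abbreviation "T_now \<equiv> layers T p j j"
abbreviation "S_next \<equiv> layers S q (j + 1) (j + 1)"
abbreviation "T_above m \<equiv> layers T p (j + 1) m"
abbreviation "S_above m \<equiv> layers S q (j + 2) (m + 1)"

lemma R0_layer: "R0 \<subseteq> layers S q (j - 1) (j - 1)"
  and R1_layer: "R1 \<subseteq> layers S q j j"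
  using admissible by (simp_all add: admissible_def)

lemma disjoint_slots:
  "R0 \<inter> R1 = {}" "R0 \<inter> S_next = {}" "R1 \<inter> S_next = {}" "(R0 \<union> R1 \<union> S_next) \<inter> S_above m = {}"
  using R0_layer R1_layer by (fastforce simp: layers_def subset_iff)+

lemma S_from_next: "j \<le> m \<Longrightarrow> layers S q (j + 1) (m + 1) = S_next \<union> S_above m"
  by (auto simp: layers_def)

lemma now_and_above_fit:
  assumes "j \<le> m"
  shows "T_now \<union> T_above m \<lesssim> R0 \<union> R1 \<union> S_next \<union> S_above m"
proof -
  have "layers T p j m = T_now \<union> T_above m" using assms by (auto simp: layers_def)
  moreover have "layers T p j m \<lesssim> R0 \<union> R1 \<union> layers S q (j + 1) (m + 1)"
    using admissible assms by (simp add: admissible_def)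
  ultimately show ?thesis by (simp only: S_from_next[OF assms] Un_assoc)
qed

lemma above_fits:
  assumes "j + 1 \<le> m"
  shows "T_above m \<lesssim> R1 \<union> S_next \<union> S_above m"
proof -
  have "T_above m \<lesssim> R1 \<union> layers S q (j + 1) (m + 1)"
    using admissible assms by (simp add: admissible_def)
  moreover have "j \<le> m" using assms by simp
  ultimately show ?thesis by (simp only: S_from_next[OF \<open>j \<le> m\<close>] Un_assoc)
qed

lemma two_above_fits:
  assumes "j + 2 \<le> m"
  shows "layers T p (j + 2) m \<lesssim> S_next \<union> S_above m"
proof -
  have "layers T p (j + 2) m \<lesssim> layers S q (j + 2 - 1) (m + 1)"
    using dominated[of "j + 2" m] j0_le assms by simp
  also have "layers S q (j + 2 - 1) (m + 1) = S_next \<union> S_above m"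
    using assms by (auto simp: layers_def)
  finally show ?thesis .
qed

lemma now_fits: "T_now \<lesssim> R0 \<union> R1 \<union> S_next"
proof -
  have "T_above j = {}" "S_above j = {}" by (auto simp: layers_def)
  then show ?thesis using now_and_above_fit[of j] by simp
qed

lemma greedy_choiceI:
  assumes "inj_on g T_now" "g ` T_now \<subseteq> R0 \<union> R1 \<union> S_next"
    and "\<And>m. j + 1 \<le> m \<Longrightarrow> T_above m \<lesssim> (R1 - g ` T_now) \<union> (S_next - g ` T_now) \<union> S_above m"
    and "\<And>m. j + 2 \<le> m \<Longrightarrow> layers T p (j + 2) m \<lesssim> (S_next - g ` T_now) \<union> S_above m"
  shows "greedy_choice j R0 R1 g"
  using assms R1_layer unfolding greedy_choice_def admissible_def by (auto simp: add.assoc)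

lemma greedy_choice_into_R0:
  assumes "inj_on g T_now" "g ` T_now \<subseteq> R0"
  shows "greedy_choice j R0 R1 g"
proof -
  have "R1 - g ` T_now = R1" "S_next - g ` T_now = S_next"
    using assms(2) disjoint_slots by blast+
  then show ?thesis
    using assms above_fits two_above_fits by (intro greedy_choiceI) auto
qed

lemma greedy_choice_into_R1:
  assumes "inj_on g T_now" "g ` T_now \<subseteq> R1" "R1 \<lesssim> R1 - g ` T_now"
  shows "greedy_choice j R0 R1 g"
proof -
  have S_next: "S_next - g ` T_now = S_next" using assms(2) disjoint_slots by blast
  show ?thesis
  proof (intro greedy_choiceI)
    fix m assume "j + 1 \<le> m"
    then have "T_above m \<lesssim> R1 \<union> (S_next \<union> S_above m)" using above_fits by (simp add: Un_assoc)
    moreover have "R1 \<inter> (S_next \<union> S_above m) = {}" using disjoint_slots by blast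
    ultimately have "T_above m \<lesssim> (R1 - g ` T_now) \<union> (S_next \<union> S_above m)"
      using lepoll_Un_spare[OF _ assms(3) Diff_subset] by blast
    then show "T_above m \<lesssim> (R1 - g ` T_now) \<union> (S_next - g ` T_now) \<union> S_above m"
      by (simp add: S_next Un_assoc)
  qed (use assms two_above_fits S_next in auto)
qed

lemma greedy_choice_into_S_next:
  assumes "inj_on g T_now" "g ` T_now \<subseteq> S_next" "S_next \<lesssim> S_next - g ` T_now"
  shows "greedy_choice j R0 R1 g"
proof -
  have R1: "R1 - g ` T_now = R1" using assms(2) disjoint_slots by blast
  show ?thesis
  proof (intro greedy_choiceI)
    fix m assume "j + 1 \<le> m"
    then have "T_above m \<lesssim> S_next \<union> (R1 \<union> S_above m)" using above_fits by (simp add: Un_ac)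
    moreover have "S_next \<inter> (R1 \<union> S_above m) = {}" using disjoint_slots by blast
    ultimately have "T_above m \<lesssim> (S_next - g ` T_now) \<union> (R1 \<union> S_above m)"
      using lepoll_Un_spare[OF _ assms(3) Diff_subset] by blast
    then show "T_above m \<lesssim> (R1 - g ` T_now) \<union> (S_next - g ` T_now) \<union> S_above m"
      by (simp add: R1 Un_ac)
  next
    fix m assume "j + 2 \<le> m"
    moreover have "S_next \<inter> S_above m = {}" using disjoint_slots by blast
    ultimately show "layers T p (j + 2) m \<lesssim> (S_next - g ` T_now) \<union> S_above m"
      using lepoll_Un_spare[OF two_above_fits assms(3) Diff_subset] by blast
  qed (use assms in auto)
qed

text \<open>A finite layer is matched bijectively onto the lowest unused slots; cancelling it from
  \<open>now_and_above_fit\<close> shows that the layers above still fit.\<close>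

lemma greedy_choice_exact:
  assumes "finite T_now" "inj_on g T_now" "R0 \<subseteq> g ` T_now" "g ` T_now \<subseteq> R0 \<union> R1 \<union> S_next"
    and "R1 \<subseteq> g ` T_now \<or> g ` T_now \<inter> S_next = {}"
  shows "greedy_choice j R0 R1 g"
proof -
  let ?B = "g ` T_now"
  have rest: "T_above m \<lesssim> (R1 - ?B) \<union> (S_next - ?B) \<union> S_above m" if "j + 1 \<le> m" for m
  proof (rule lepoll_cancel_finite[OF assms(1)])
    show "T_now \<approx> ?B" using assms(2) inj_on_image_eqpoll_self eqpoll_sym by blast
    show "T_now \<inter> T_above m = {}" by (simp add: layers_disjoint)
    show "?B \<inter> ((R1 - ?B) \<union> (S_next - ?B) \<union> S_above m) = {}"
      using assms(4) disjoint_slots(4) by blast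
    have "T_now \<union> T_above m \<lesssim> R0 \<union> R1 \<union> S_next \<union> S_above m"
      using that by (intro now_and_above_fit) simp
    also have "R0 \<union> R1 \<union> S_next \<union> S_above m = ?B \<union> ((R1 - ?B) \<union> (S_next - ?B) \<union> S_above m)"
      using assms(3,4) by blast
    finally show "T_now \<union> T_above m \<lesssim> ?B \<union> ((R1 - ?B) \<union> (S_next - ?B) \<union> S_above m)" .
  qed
  show ?thesis
  proof (intro greedy_choiceI[OF assms(2,4) rest])
    fix m assume m: "j + 2 \<le> m"
    show "layers T p (j + 2) m \<lesssim> (S_next - ?B) \<union> S_above m"
    proof (cases "R1 \<subseteq> ?B")
      case True
      have "layers T p (j + 2) m \<lesssim> T_above m" by (intro subset_imp_lepoll layers_mono) auto
      also have "T_above m \<lesssim> (S_next - ?B) \<union> S_above m"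
        using rest[of m] m \<open>R1 \<subseteq> ?B\<close> by (simp add: Diff_eq_empty_iff[THEN iffD2])
      finally show ?thesis .
    next
      case False
      then have "S_next - ?B = S_next" using assms(5) by blast
      then show ?thesis using two_above_fits m by simp
    qed
  qed
qed

lemma greedy_choice_exists: "\<exists>g. greedy_choice j R0 R1 g"
proof (cases "T_now \<lesssim> R0")
  case True
  then show ?thesis unfolding lepoll_def using greedy_choice_into_R0 by blast
next
  case not_R0: False
  show ?thesis
  proof (cases "finite T_now")
    case False
    then have "T_now \<lesssim> R1 \<or> T_now \<lesssim> S_next"
      using infinite_lepoll_UnD[OF False] now_fits not_R0 by (metis Un_assoc)
    then show ?thesis
      using infinite_lepoll_spare[OF False] greedy_choice_into_R1 greedy_choice_into_S_next by metis
  next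
    case True
    obtain C D where CD: "finite C" "card C \<le> card T_now" "C \<inter> D = {}" "T_now \<lesssim> C \<union> D"
      and "C = R0 \<and> D = R1 \<or> C = R0 \<union> R1 \<and> D = S_next"
    proof (cases "T_now \<lesssim> R0 \<union> R1")
      case fits: True
      have "finite R0" "R0 \<lesssim> T_now" using not_R0 True lepoll_total finite_lepoll_infinite by blast+
      then show ?thesis using that[of R0 R1] fits True disjoint_slots by (simp add: lepoll_iff_card_le)
    next
      case False
      have "finite (R0 \<union> R1)" "R0 \<union> R1 \<lesssim> T_now"
        using False True lepoll_total finite_lepoll_infinite by blast+
      then show ?thesis using that[of "R0 \<union> R1" S_next] True now_fits disjoint_slots
        by (auto simp: lepoll_iff_card_le)
    qed
    obtain Q where Q: "Q \<subseteq> D" "T_now \<approx> C \<union> Q" using finite_lepoll_fill[OF True CD(4,1,2,3)] .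
    then obtain g where "bij_betw g T_now (C \<union> Q)" unfolding eqpoll_def by blast
    then have g: "inj_on g T_now" "g ` T_now = C \<union> Q" by (simp_all add: bij_betw_def)
    from \<open>C = R0 \<and> D = R1 \<or> C = R0 \<union> R1 \<and> D = S_next\<close> show ?thesis
    proof
      assume "C = R0 \<and> D = R1"
      then show ?thesis
        using Q(1) g(2) disjoint_slots by (intro exI[of _ g] greedy_choice_exact[OF True g(1)]) auto
    next
      assume "C = R0 \<union> R1 \<and> D = S_next"
      then show ?thesis
        using Q(1) g(2) by (intro exI[of _ g] greedy_choice_exact[OF True g(1)]) auto
    qed
  qed
qed

end

context layer_domination
begin

lemma admissible_imp_greedy_choice:
  assumes "j0 \<le> j" "admissible j R0 R1"
  shows "\<exists>g. greedy_choice j R0 R1 g"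
proof -
  interpret greedy_step T S p q j0 j R0 R1 by unfold_locales (fact assms)+
  show ?thesis by (rule greedy_choice_exists)
qed

definition greedy_map :: "int \<Rightarrow> 'b set \<Rightarrow> 'b set \<Rightarrow> 'a \<Rightarrow> 'b" where
  "greedy_map j R0 R1 = (SOME g. greedy_choice j R0 R1 g)"

text \<open>\<open>unused n\<close> is the pair \<open>(R0, R1)\<close> of unused slots before layer \<open>j0 + n\<close> of \<open>T\<close> is treated.\<close>

primrec unused :: "nat \<Rightarrow> 'b set \<times> 'b set" where
  "unused 0 = (layers S q (j0 - 1) (j0 - 1), layers S q j0 j0)"
| "unused (Suc n) =
    (let j = j0 + int n; B = greedy_map j (fst (unused n)) (snd (unused n)) ` layers T p j j
     in (snd (unused n) - B, layers S q (j + 1) (j + 1) - B))"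

definition stage_map :: "nat \<Rightarrow> 'a \<Rightarrow> 'b" where
  "stage_map n = greedy_map (j0 + int n) (fst (unused n)) (snd (unused n))"

definition stage_image :: "nat \<Rightarrow> 'b set" where
  "stage_image n = stage_map n ` layers T p (j0 + int n) (j0 + int n)"

lemma unused_Suc:
  "fst (unused (Suc n)) = snd (unused n) - stage_image n"
  "snd (unused (Suc n)) = layers S q (j0 + int n + 1) (j0 + int n + 1) - stage_image n"
  by (simp_all add: stage_image_def stage_map_def Let_def)

lemma admissible_unused: "admissible (j0 + int n) (fst (unused n)) (snd (unused n))"
proof (induction n)
  case 0
  show ?case using admissible_start by simp
next
  case (Suc n)
  then have "greedy_choice (j0 + int n) (fst (unused n)) (snd (unused n)) (stage_map n)"
    unfolding stage_map_def greedy_map_def by (rule someI_ex[OF admissible_imp_greedy_choice, rotated]) simp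
  then have "admissible (j0 + int n + 1) (snd (unused n) - stage_image n)
      (layers S q (j0 + int n + 1) (j0 + int n + 1) - stage_image n)"
    by (simp add: greedy_choice_def stage_image_def add.assoc)
  moreover have "j0 + int (Suc n) = j0 + int n + 1" by simp
  ultimately show ?case by (simp only: unused_Suc)
qed

lemma greedy_choice_stage: "greedy_choice (j0 + int n) (fst (unused n)) (snd (unused n)) (stage_map n)"
  unfolding stage_map_def greedy_map_def
  by (rule someI_ex[OF admissible_imp_greedy_choice[OF _ admissible_unused]]) simp

lemma stage_image_layers:
  assumes "s \<in> stage_image n"
  shows "s \<in> S \<and> j0 + int n - 1 \<le> q s \<and> q s \<le> j0 + int n + 1"
proof -
  have "stage_image n \<subseteq> fst (unused n) \<union> snd (unused n) \<union> layers S q (j0 + int n + 1) (j0 + int n + 1)"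
    using greedy_choice_stage[of n] by (simp add: greedy_choice_def stage_image_def)
  moreover have "fst (unused n) \<subseteq> layers S q (j0 + int n - 1) (j0 + int n - 1)"
    "snd (unused n) \<subseteq> layers S q (j0 + int n) (j0 + int n)"
    using admissible_unused[of n] by (simp_all add: admissible_def)
  ultimately show ?thesis using assms by (fastforce simp: layers_def)
qed

lemma earlier_stage_images:
  "(\<Union>i<n. stage_image i) \<inter> (fst (unused n) \<union> snd (unused n)) = {}
   \<and> (\<forall>s\<in>\<Union>i<n. stage_image i. q s \<le> j0 + int n)"
proof (induction n)
  case 0
  show ?case by simp
next
  case (Suc n)
  have U: "(\<Union>i<Suc n. stage_image i) = (\<Union>i<n. stage_image i) \<union> stage_image n"
    by (simp add: lessThan_Suc Un_commute)
  have "(\<Union>i<n. stage_image i) \<inter> layers S q (j0 + int n + 1) (j0 + int n + 1) = {}"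
    using Suc by (force simp: layers_def)
  then have "(\<Union>i<Suc n. stage_image i) \<inter> (fst (unused (Suc n)) \<union> snd (unused (Suc n))) = {}"
    using Suc unfolding U unused_Suc by blast
  moreover have "\<forall>s\<in>\<Union>i<Suc n. stage_image i. q s \<le> j0 + int (Suc n)"
    using Suc stage_image_layers[of _ n] unfolding U by force
  ultimately show ?case by blast
qed

lemma stage_images_disjoint:
  assumes "i < n"
  shows "stage_image i \<inter> stage_image n = {}"
proof -
  let ?U = "\<Union>i<n. stage_image i"
  have U: "?U \<inter> (fst (unused n) \<union> snd (unused n)) = {}" "\<forall>s\<in>?U. q s \<le> j0 + int n"
    using earlier_stage_images[of n] by blast+
  then have "?U \<inter> layers S q (j0 + int n + 1) (j0 + int n + 1) = {}"
    by (fastforce simp: layers_def)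
  moreover have "stage_image n \<subseteq> fst (unused n) \<union> snd (unused n) \<union> layers S q (j0 + int n + 1) (j0 + int n + 1)"
    using greedy_choice_stage[of n] by (simp add: greedy_choice_def stage_image_def)
  moreover have "stage_image i \<subseteq> ?U" using assms by blast
  ultimately show ?thesis using U(1) by blast
qed

theorem exists_layer_injection:
  "\<exists>f. inj_on f {t \<in> T. j0 \<le> p t} \<and> (\<forall>t\<in>T. j0 \<le> p t \<longrightarrow> f t \<in> S \<and> \<bar>p t - q (f t)\<bar> \<le> 1)"
proof -
  define stage where "stage t = nat (p t - j0)" for t
  define f where "f t = stage_map (stage t) t" for t
  have mem: "t \<in> layers T p (j0 + int (stage t)) (j0 + int (stage t))" if "t \<in> T" "j0 \<le> p t" for t
    using that by (simp add: layers_def stage_def)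
  then have image: "f t \<in> stage_image (stage t)" if "t \<in> T" "j0 \<le> p t" for t
    using that by (simp add: f_def stage_image_def)
  have "inj_on f {t \<in> T. j0 \<le> p t}"
  proof (rule inj_onI)
    fix x y assume x: "x \<in> {t \<in> T. j0 \<le> p t}" and y: "y \<in> {t \<in> T. j0 \<le> p t}" and "f x = f y"
    have "stage x = stage y"
      using image[of x] image[of y] x y \<open>f x = f y\<close> stage_images_disjoint
      by (metis CollectD disjoint_iff linorder_neqE_nat)
    moreover have "inj_on (stage_map (stage x)) (layers T p (j0 + int (stage x)) (j0 + int (stage x)))"
      using greedy_choice_stage by (simp add: greedy_choice_def)
    ultimately show "x = y" using mem[of x] mem[of y] x y \<open>f x = f y\<close> by (simp add: f_def inj_on_eq_iff)
  qed
  moreover have "f t \<in> S \<and> \<bar>p t - q (f t)\<bar> \<le> 1" if "t \<in> T" "j0 \<le> p t" for t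
    using stage_image_layers[OF image[OF that]] that by (auto simp: stage_def)
  ultimately show ?thesis by blast
qed

end

section \<open>Merging injections and padding\<close>

text \<open>Banach's decomposition: with \<open>X\<close> the least fixed point of \<open>X \<mapsto> A - g ` (B - f ` X)\<close>,
  \<open>f\<close> on \<open>X\<close> and \<open>g\<inverse>\<close> on \<open>g ` (B - f ` X)\<close> fit together to a bijection.\<close>

lemma partial_injections_bij_betw:
  assumes f: "inj_on f A" "f ` A \<subseteq> S" and g: "inj_on g B" "g ` B \<subseteq> T"
    and "A \<subseteq> T" "B \<subseteq> S"
  obtains T' S' h where "A \<subseteq> T'" "T' \<subseteq> T" "B \<subseteq> S'" "S' \<subseteq> S" "bij_betw h T' S'"
    "\<And>t. t \<in> T' \<Longrightarrow> (t \<in> A \<and> h t = f t) \<or> (h t \<in> B \<and> g (h t) = t)"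
proof -
  define F where "F X = A - g ` (B - f ` X)" for X
  have "mono F" unfolding F_def by (rule monoI) blast
  define X where "X = lfp F"
  define D where "D = B - f ` X"
  have XD: "X = A - g ` D" unfolding X_def D_def using lfp_unfold[OF \<open>mono F\<close>] by (simp add: F_def)
  define h where "h t = (if t \<in> X then f t else inv_into D g t)" for t
  have injD: "inj_on g D" using g(1) by (rule inj_on_subset) (auto simp: D_def)
  have "bij_betw f X (f ` X)" using inj_on_imp_bij_betw[OF inj_on_subset[OF f(1)]] XD by blast
  then have "bij_betw h X (f ` X)" using bij_betw_cong[of X h f] by (simp add: h_def)
  moreover have "bij_betw h (g ` D) D"
  proof -
    have "bij_betw (inv_into D g) (g ` D) D" by (rule bij_betw_inv_into[OF inj_on_imp_bij_betw[OF injD]])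
    moreover have "\<And>t. t \<in> g ` D \<Longrightarrow> h t = inv_into D g t" using XD by (auto simp: h_def)
    ultimately show ?thesis using bij_betw_cong[of "g ` D" h "inv_into D g" D] by blast
  qed
  ultimately have bij: "bij_betw h (X \<union> g ` D) (f ` X \<union> D)"
    by (rule bij_betw_combine) (auto simp: D_def)
  have from_f_or_g: "(t \<in> A \<and> h t = f t) \<or> (h t \<in> B \<and> g (h t) = t)" if "t \<in> X \<union> g ` D" for t
  proof (cases "t \<in> X")
    case True
    then show ?thesis using XD by (auto simp: h_def)
  next
    case False
    then have "t \<in> g ` D" using that by blast
    then have "inv_into D g t \<in> D" "g (inv_into D g t) = t" by (auto intro: inv_into_into f_inv_into_f)
    then show ?thesis using False by (auto simp: h_def D_def)
  qed
  have "A \<subseteq> X \<union> g ` D" "X \<union> g ` D \<subseteq> T" "B \<subseteq> f ` X \<union> D" "f ` X \<union> D \<subseteq> S"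
    using XD assms by (auto simp: D_def)
  from that[OF this bij from_f_or_g] show ?thesis .
qed

lemma near_layer_bij:
  assumes "layer_domination T S p q j0" "layer_domination S T q p j0"
  obtains T' S' h where "{t \<in> T. j0 \<le> p t} \<subseteq> T'" "T' \<subseteq> T" "{s \<in> S. j0 \<le> q s} \<subseteq> S'" "S' \<subseteq> S"
    "bij_betw h T' S'" "\<And>t. t \<in> T' \<Longrightarrow> \<bar>p t - q (h t)\<bar> \<le> 1"
proof -
  obtain f where f: "inj_on f {t \<in> T. j0 \<le> p t}" "\<forall>t\<in>T. j0 \<le> p t \<longrightarrow> f t \<in> S \<and> \<bar>p t - q (f t)\<bar> \<le> 1"
    using layer_domination.exists_layer_injection[OF assms(1)] by blast
  obtain g where g: "inj_on g {s \<in> S. j0 \<le> q s}" "\<forall>s\<in>S. j0 \<le> q s \<longrightarrow> g s \<in> T \<and> \<bar>q s - p (g s)\<bar> \<le> 1"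
    using layer_domination.exists_layer_injection[OF assms(2)] by blast
  have "f ` {t \<in> T. j0 \<le> p t} \<subseteq> S" "g ` {s \<in> S. j0 \<le> q s} \<subseteq> T" using f g by auto
  then obtain T' S' h where h: "{t \<in> T. j0 \<le> p t} \<subseteq> T'" "T' \<subseteq> T" "{s \<in> S. j0 \<le> q s} \<subseteq> S'" "S' \<subseteq> S"
      "bij_betw h T' S'"
    and f_or_g: "\<And>t. t \<in> T' \<Longrightarrow> (t \<in> {t \<in> T. j0 \<le> p t} \<and> h t = f t) \<or> (h t \<in> {s \<in> S. j0 \<le> q s} \<and> g (h t) = t)"
    by (rule partial_injections_bij_betw[OF f(1) _ g(1)]) auto
  have "\<bar>p t - q (h t)\<bar> \<le> 1" if "t \<in> T'" for t
    using f_or_g[OF that] f(2) g(2) by force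
  from that[OF h this] show ?thesis .
qed

lemma bij_betw_case_sum:
  assumes "bij_betw f A C" "bij_betw g B D" "C \<inter> D = {}"
  shows "bij_betw (case_sum f g) (A <+> B) (C \<union> D)"
proof -
  have "case_sum f g ` (A <+> B) = f ` A \<union> g ` B" by (auto simp: Plus_def image_Un image_image)
  then have image: "case_sum f g ` (A <+> B) = C \<union> D" using assms(1,2) by (simp add: bij_betw_def)
  have "x = y" if "x \<in> A <+> B" "y \<in> A <+> B" "case_sum f g x = case_sum f g y" for x y
  proof -
    have "f a \<noteq> g b" if "a \<in> A" "b \<in> B" for a b
      using assms that by (auto simp: bij_betw_def)
    then show ?thesis using that bij_betw_imp_inj_on[OF assms(1)] bij_betw_imp_inj_on[OF assms(2)]
      by (cases x; cases y) (auto dest: inj_onD sym)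
  qed
  then show ?thesis using image by (simp add: bij_betw_def inj_on_def)
qed

lemma bij_betw_pad:
  assumes h: "bij_betw h T' S'" and "T' \<subseteq> T" "S' \<subseteq> S"
    and e: "inj_on e (T - T')" "e ` (T - T') \<subseteq> S - S'"
  shows "bij_betw (case_sum (\<lambda>t. if t \<in> T' then h t else e t) id) (T <+> (S - S' - e ` (T - T'))) S"
proof -
  define \<phi> where "\<phi> = (\<lambda>t. if t \<in> T' then h t else e t)"
  have "bij_betw \<phi> T' S'" using h bij_betw_cong[of T' \<phi> h] by (simp add: \<phi>_def)
  moreover have "bij_betw \<phi> (T - T') (e ` (T - T'))"
    using inj_on_imp_bij_betw[OF e(1)] bij_betw_cong[of "T - T'" \<phi> e] by (simp add: \<phi>_def)
  ultimately have "bij_betw \<phi> (T' \<union> (T - T')) (S' \<union> e ` (T - T'))"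
    using e(2) by (intro bij_betw_combine) auto
  then have "bij_betw \<phi> T (S' \<union> e ` (T - T'))" using assms(2) by (simp add: Un_absorb1)
  then have "bij_betw (case_sum \<phi> id) (T <+> (S - S' - e ` (T - T'))) (S' \<union> e ` (T - T') \<union> (S - S' - e ` (T - T')))"
    by (rule bij_betw_case_sum) (use e(2) in auto)
  moreover have "S' \<union> e ` (T - T') \<union> (S - S' - e ` (T - T')) = S" using assms(3) e(2) by blast
  ultimately show ?thesis by (simp add: \<phi>_def)
qed

section \<open>Levels and ratios\<close>

text \<open>For \<open>0 < \<delta> < 1\<close>, \<open>level \<delta> x\<close> is the unique integer \<open>n\<close> with \<open>\<delta> powi (n + 1) \<le> x < \<delta> powi n\<close>.\<close>

definition level :: "real \<Rightarrow> real \<Rightarrow> int" where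
  "level \<delta> x = \<lceil>ln x / ln \<delta>\<rceil> - 1"

lemma powi_eq_exp_ln:
  fixes x :: real
  assumes "0 < x"
  shows "x powi n = exp (of_int n * ln x)"
proof -
  have "x powi n = exp (ln x) powi n" by (subst exp_ln[OF assms]) simp
  also have "\<dots> = exp (of_int n * ln x)" by (rule exp_power_int)
  finally show ?thesis .
qed

lemma powi_le_less_iff_level:
  assumes "0 < \<delta>" "\<delta> < 1" "0 < x"
  shows "\<delta> powi a \<le> x \<and> x < \<delta> powi b \<longleftrightarrow> b \<le> level \<delta> x \<and> level \<delta> x \<le> a - 1"
proof -
  define L where "L = ln \<delta>"
  define y where "y = ln x / L"
  have L: "L < 0" using assms by (simp add: L_def)
  have lx: "ln x = y * L" using L by (simp add: y_def)
  have "\<delta> powi a \<le> x \<longleftrightarrow> of_int a * L \<le> ln x"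
    using powi_eq_exp_ln[OF assms(1), of a] assms(3) by (metis L_def exp_le_cancel_iff exp_ln)
  also have "\<dots> \<longleftrightarrow> y \<le> of_int a" using L lx by (simp add: mult_le_cancel_right)
  also have "\<dots> \<longleftrightarrow> level \<delta> x \<le> a - 1"
    using ceiling_le_iff[of y a] unfolding level_def y_def L_def by linarith
  finally have lower: "\<delta> powi a \<le> x \<longleftrightarrow> level \<delta> x \<le> a - 1" .
  have "x < \<delta> powi b \<longleftrightarrow> ln x < of_int b * L"
    using powi_eq_exp_ln[OF assms(1), of b] assms(3) by (metis L_def exp_less_cancel_iff exp_ln)
  also have "\<dots> \<longleftrightarrow> of_int b < y" using L lx by (simp add: mult_less_cancel_right)
  also have "\<dots> \<longleftrightarrow> b \<le> level \<delta> x"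
    using less_ceiling_iff[of b y] unfolding level_def y_def L_def by linarith
  finally show ?thesis using lower by blast
qed

lemma powi_level_bounds:
  assumes "0 < \<delta>" "\<delta> < 1" "0 < x"
  shows "\<delta> powi (level \<delta> x + 1) \<le> x" "x < \<delta> powi level \<delta> x"
  using powi_le_less_iff_level[OF assms, of "level \<delta> x + 1" "level \<delta> x"] by simp_all

lemma less_powi_iff_level:
  assumes "0 < \<delta>" "\<delta> < 1" "0 < x"
  shows "x < \<delta> powi b \<longleftrightarrow> b \<le> level \<delta> x"
  using powi_le_less_iff_level[OF assms, of "level \<delta> x + 1" b] powi_level_bounds(1)[OF assms] by auto

lemma lvl_powi_eq_layers:
  assumes "0 < \<delta>" "\<delta> < 1" "\<forall>x\<in>A. 0 < f x"
  shows "lvl f A (\<delta> powi a) (\<delta> powi b) = layers A (\<lambda>x. level \<delta> (f x)) b (a - 1)"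
  using powi_le_less_iff_level[OF assms(1,2)] assms(3) unfolding lvl_def layers_def by auto

definition ratio_bounded :: "real \<Rightarrow> real \<Rightarrow> real \<Rightarrow> bool" where
  "ratio_bounded c x y \<longleftrightarrow> c \<le> x / y \<and> x / y \<le> 1 / c"

lemma ratio_boundedI:
  assumes "0 < c" "0 < x" "0 < y" "c \<le> x / y" "c \<le> y / x"
  shows "ratio_bounded c x y"
proof -
  have "x / y = 1 / (y / x)" by simp
  also have "\<dots> \<le> 1 / c" using assms by (intro divide_left_mono) auto
  finally show ?thesis using assms(4) by (simp add: ratio_bounded_def)
qed

lemma ratio_bounded_commute:
  assumes "0 < c" "0 < x" "0 < y" "ratio_bounded c x y"
  shows "ratio_bounded c y x"
proof -
  have "c \<le> 1 / (x / y)" using assms by (simp add: ratio_bounded_def le_divide_eq mult.commute)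
  then show ?thesis using assms by (intro ratio_boundedI) (auto simp: ratio_bounded_def)
qed

lemma ratio_bounded_mono: "0 < c' \<Longrightarrow> c' \<le> c \<Longrightarrow> ratio_bounded c x y \<Longrightarrow> ratio_bounded c' x y"
  unfolding ratio_bounded_def by (meson dual_order.trans frac_le order.refl zero_less_one_class.zero_le_one)

lemma ratio_bounded_in_interval:
  assumes "0 < a" "a \<le> x" "x \<le> b" "a \<le> y" "y \<le> b"
  shows "ratio_bounded (a / b) x y"
  using assms by (intro ratio_boundedI) (auto intro!: frac_le)

lemma power2_le_ratio_of_level_le:
  assumes "0 < \<delta>" "\<delta> < 1" "0 < x" "0 < y" "level \<delta> x \<le> level \<delta> y + 1"
  shows "\<delta>\<^sup>2 \<le> x / y"
proof -
  let ?a = "level \<delta> x" and ?b = "level \<delta> y"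
  have "\<delta>\<^sup>2 = \<delta> powi 2" by simp
  also have "\<dots> \<le> \<delta> powi (?a + 1 - ?b)" using assms by (intro power_int_decreasing) auto
  also have "\<dots> = \<delta> powi (?a + 1) / \<delta> powi ?b" using assms(1) by (simp add: power_int_diff)
  also have "\<dots> \<le> x / y"
    using powi_level_bounds[OF assms(1,2,3)] powi_level_bounds[OF assms(1,2,4)] assms(1,3,4)
    by (intro frac_le) auto
  finally show ?thesis .
qed

lemma ratio_bounded_near_levels:
  assumes "0 < \<delta>" "\<delta> < 1" "0 < x" "0 < y" "\<bar>level \<delta> x - level \<delta> y\<bar> \<le> 1"
  shows "ratio_bounded (\<delta>\<^sup>2) x y"
  using assms power2_le_ratio_of_level_le[of \<delta> x y] power2_le_ratio_of_level_le[of \<delta> y x] by (intro ratio_boundedI) auto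

lemma layer_domination_of_lvl:
  assumes "0 < \<delta>" "\<delta> < 1" "\<forall>t\<in>T. 0 < \<tau> t" "\<forall>s\<in>S. 0 < \<sigma> s"
    and dominated: "\<And>k l. j0 \<le> k \<Longrightarrow> 1 \<le> l \<Longrightarrow> lvl \<tau> T (\<delta> powi (k + int l)) (\<delta> powi k)
      \<lesssim> lvl \<sigma> S (\<delta> powi (k + int l + 1)) (\<delta> powi (k - 1))"
  shows "layer_domination T S (\<lambda>t. level \<delta> (\<tau> t)) (\<lambda>s. level \<delta> (\<sigma> s)) j0"
proof
  fix k m assume "j0 \<le> k" "k \<le> m"
  then have "1 \<le> nat (m - k + 1)" and l: "k + int (nat (m - k + 1)) = m + 1" by simp_all
  from dominated[OF \<open>j0 \<le> k\<close> this(1)]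
  show "layers T (\<lambda>t. level \<delta> (\<tau> t)) k m \<lesssim> layers S (\<lambda>s. level \<delta> (\<sigma> s)) (k - 1) (m + 1)"
    unfolding l lvl_powi_eq_layers[OF assms(1-3)] lvl_powi_eq_layers[OF assms(1,2,4)] by (simp add: add.commute)
qed

lemma near_bij_below_threshold:
  assumes "0 < \<delta>" "\<delta> < 1" "\<forall>t\<in>T. 0 < \<tau> t" "\<forall>s\<in>S. 0 < \<sigma> s"
    and "\<And>k l. j0 \<le> k \<Longrightarrow> 1 \<le> l \<Longrightarrow> lvl \<tau> T (\<delta> powi (k + int l)) (\<delta> powi k)
      \<lesssim> lvl \<sigma> S (\<delta> powi (k + int l + 1)) (\<delta> powi (k - 1))"
    and "\<And>k l. j0 \<le> k \<Longrightarrow> 1 \<le> l \<Longrightarrow> lvl \<sigma> S (\<delta> powi (k + int l)) (\<delta> powi k)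
      \<lesssim> lvl \<tau> T (\<delta> powi (k + int l + 1)) (\<delta> powi (k - 1))"
  obtains T' S' h where "{t \<in> T. \<tau> t < \<delta> powi j0} \<subseteq> T'" "T' \<subseteq> T"
    "{s \<in> S. \<sigma> s < \<delta> powi j0} \<subseteq> S'" "S' \<subseteq> S"
    "bij_betw h T' S'" "\<And>t. t \<in> T' \<Longrightarrow> ratio_bounded (\<delta>\<^sup>2) (\<tau> t) (\<sigma> (h t))"
proof -
  obtain T' S' h where h: "{t \<in> T. j0 \<le> level \<delta> (\<tau> t)} \<subseteq> T'" "T' \<subseteq> T"
      "{s \<in> S. j0 \<le> level \<delta> (\<sigma> s)} \<subseteq> S'" "S' \<subseteq> S" "bij_betw h T' S'"
    and near: "\<And>t. t \<in> T' \<Longrightarrow> \<bar>level \<delta> (\<tau> t) - level \<delta> (\<sigma> (h t))\<bar> \<le> 1"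
    by (rule near_layer_bij[OF layer_domination_of_lvl[OF assms(1-5)] layer_domination_of_lvl[OF assms(1,2,4,3,6)]])
      auto
  have "{t \<in> T. \<tau> t < \<delta> powi j0} \<subseteq> T'" "{s \<in> S. \<sigma> s < \<delta> powi j0} \<subseteq> S'"
    using h(1,3) less_powi_iff_level[OF assms(1,2)] assms(3,4) by auto
  moreover have "ratio_bounded (\<delta>\<^sup>2) (\<tau> t) (\<sigma> (h t))" if "t \<in> T'" for t
  proof -
    have "h t \<in> S" using h(4,5) that by (auto simp: bij_betw_def)
    then show ?thesis using ratio_bounded_near_levels[OF assms(1,2) _ _ near[OF that]] assms(3,4) h(2) that
      by blast
  qed
  ultimately show ?thesis using that h(2,4,5) by blast
qed

lemma exists_padded_bij:
  fixes S :: "'b set"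
  assumes h: "bij_betw h T' S'" "T' \<subseteq> T" "S' \<subseteq> S" and "T - T' \<lesssim> S - S'"
    and near: "\<And>t. t \<in> T' \<Longrightarrow> ratio_bounded c (\<tau> t) (\<sigma> (h t))"
    and far_T: "\<And>t. t \<in> T - T' \<Longrightarrow> a \<le> \<tau> t \<and> \<tau> t \<le> b"
    and far_S: "\<And>s. s \<in> S - S' \<Longrightarrow> a \<le> \<sigma> s \<and> \<sigma> s \<le> b"
    and "0 < c" "c \<le> a / b" "0 < a" "a \<le> 1" "1 \<le> b"
  shows "\<exists>(I :: 'b set) \<eta>. bij_betw \<eta> (T <+> I) S \<and> (\<forall>x\<in>T <+> I. ratio_bounded c (case_sum \<tau> (\<lambda>_. 1) x) (\<sigma> (\<eta> x)))"
proof -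
  obtain e where e: "inj_on e (T - T')" "e ` (T - T') \<subseteq> S - S'"
    using \<open>T - T' \<lesssim> S - S'\<close> unfolding lepoll_def by blast
  define I where "I = S - S' - e ` (T - T')"
  define \<eta> where "\<eta> = case_sum (\<lambda>t. if t \<in> T' then h t else e t) id"
  have far: "ratio_bounded c x y" if "a \<le> x \<and> x \<le> b" "a \<le> y \<and> y \<le> b" for x y
    using that assms(8-10) by (blast intro: ratio_bounded_mono ratio_bounded_in_interval)
  have "ratio_bounded c (case_sum \<tau> (\<lambda>_. 1) x) (\<sigma> (\<eta> x))" if "x \<in> T <+> I" for x
  proof (cases x)
    case (Inl t)
    then have "t \<in> T" using that by auto
    then show ?thesis
      using Inl near far[OF far_T far_S] e(2) by (cases "t \<in> T'") (auto simp: \<eta>_def)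
  next
    case (Inr s)
    then have "s \<in> S - S'" using that by (auto simp: I_def)
    then show ?thesis using Inr far[OF _ far_S] assms(11,12) by (simp add: \<eta>_def)
  qed
  moreover have "bij_betw \<eta> (T <+> I) S" unfolding \<eta>_def I_def by (rule bij_betw_pad[OF h e])
  ultimately show ?thesis by blast
qed

lemma exists_padded_bij_either:
  fixes T :: "'a set" and S :: "'b set"
  assumes h: "bij_betw h T' S'" "T' \<subseteq> T" "S' \<subseteq> S"
    and pos: "\<forall>t\<in>T. 0 < \<tau> t" "\<forall>s\<in>S. 0 < \<sigma> s"
    and near: "\<And>t. t \<in> T' \<Longrightarrow> ratio_bounded c (\<tau> t) (\<sigma> (h t))"
    and far_T: "\<And>t. t \<in> T - T' \<Longrightarrow> a \<le> \<tau> t \<and> \<tau> t \<le> b"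
    and far_S: "\<And>s. s \<in> S - S' \<Longrightarrow> a \<le> \<sigma> s \<and> \<sigma> s \<le> b"
    and c: "0 < c" "c \<le> a / b" and ab: "0 < a" "a \<le> 1" "1 \<le> b"
  shows "(\<exists>(I :: 'b set) \<eta>. bij_betw \<eta> (T <+> I) S
            \<and> (\<forall>x\<in>T <+> I. ratio_bounded c (case_sum \<tau> (\<lambda>_. 1) x) (\<sigma> (\<eta> x))))
       \<or> (\<exists>(I :: 'a set) \<eta>. bij_betw \<eta> T (S <+> I)
            \<and> (\<forall>t\<in>T. ratio_bounded c (\<tau> t) (case_sum \<sigma> (\<lambda>_. 1) (\<eta> t))))"
proof (cases "T - T' \<lesssim> S - S'")
  case True
  then show ?thesis using exists_padded_bij[where \<tau> = \<tau> and \<sigma> = \<sigma>, OF h True near far_T far_S c ab] by blast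
next
  case False
  then have "S - S' \<lesssim> T - T'" using lepoll_total by blast
  define h' where "h' = inv_into T' h"
  have h': "bij_betw h' S' T'" unfolding h'_def by (rule bij_betw_inv_into[OF h(1)])
  have near': "ratio_bounded c (\<sigma> s) (\<tau> (h' s))" if "s \<in> S'" for s
  proof -
    have "h' s \<in> T'" "h (h' s) = s"
      using h(1) that by (auto simp: h'_def bij_betw_def intro: inv_into_into f_inv_into_f)
    then show ?thesis using ratio_bounded_commute[OF c(1)] near pos h(2,3) that by fastforce
  qed
  have "\<exists>(I :: 'a set) \<beta>. bij_betw \<beta> (S <+> I) T
      \<and> (\<forall>x\<in>S <+> I. ratio_bounded c (case_sum \<sigma> (\<lambda>_. 1) x) (\<tau> (\<beta> x)))"
    by (rule exists_padded_bij[OF h' h(3,2) \<open>S - S' \<lesssim> T - T'\<close>]) (use near' far_S far_T c ab in auto)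
  then obtain I :: "'a set" and \<beta> where \<beta>: "bij_betw \<beta> (S <+> I) T"
    "\<forall>x\<in>S <+> I. ratio_bounded c (case_sum \<sigma> (\<lambda>_. 1) x) (\<tau> (\<beta> x))"
    by blast
  define \<eta> where "\<eta> = inv_into (S <+> I) \<beta>"
  have \<eta>: "bij_betw \<eta> T (S <+> I)" unfolding \<eta>_def by (rule bij_betw_inv_into[OF \<beta>(1)])
  have "ratio_bounded c (\<tau> t) (case_sum \<sigma> (\<lambda>_. 1) (\<eta> t))" if "t \<in> T" for t
  proof -
    have "\<eta> t \<in> S <+> I" using bij_betwE[OF \<eta>] that by blast
    moreover have "\<beta> (\<eta> t) = t" using \<beta>(1) that by (simp add: \<eta>_def bij_betw_def f_inv_into_f)
    moreover have "0 < case_sum \<sigma> (\<lambda>_. 1) (\<eta> t)" using pos(2) \<open>\<eta> t \<in> S <+> I\<close> by auto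
    ultimately show ?thesis using ratio_bounded_commute[OF c(1)] \<beta>(2) pos(1) that by metis
  qed
  with \<eta> show ?thesis by blast
qed

lemma exists_ratio_bounded_bij_with_padding:
  fixes T :: "'a set" and S :: "'b set"
  assumes N: "0 \<le> N" and delta: "0 < \<delta>" "\<delta> < 1" "1 \<le> M"
    and tau: "\<And>t. t \<in> T \<Longrightarrow> 0 < \<tau> t \<and> \<tau> t \<le> M"
    and sigma: "\<And>s. s \<in> S \<Longrightarrow> 0 < \<sigma> s \<and> \<sigma> s \<le> M"
    and dominated: "\<forall>k::int. \<forall>l::nat. k \<ge> N \<and> l \<ge> 1 \<longrightarrow>
         lvl \<tau> T (\<delta> powi (k + int l)) (\<delta> powi k)
           \<lesssim> lvl \<sigma> S (\<delta> powi (k + int l + 1)) (\<delta> powi (k - 1))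
       \<and> lvl \<sigma> S (\<delta> powi (k + int l)) (\<delta> powi k)
           \<lesssim> lvl \<tau> T (\<delta> powi (k + int l + 1)) (\<delta> powi (k - 1))"
  shows "\<exists>c>0. (\<exists>(I :: 'b set) \<eta>. bij_betw \<eta> (T <+> I) S
            \<and> (\<forall>x\<in>T <+> I. ratio_bounded c (case_sum \<tau> (\<lambda>_. 1) x) (\<sigma> (\<eta> x))))
       \<or> (\<exists>(I :: 'a set) \<eta>. bij_betw \<eta> T (S <+> I)
            \<and> (\<forall>t\<in>T. ratio_bounded c (\<tau> t) (case_sum \<sigma> (\<lambda>_. 1) (\<eta> t))))"
proof -
  have tpos: "\<forall>t\<in>T. 0 < \<tau> t" and spos: "\<forall>s\<in>S. 0 < \<sigma> s" using tau sigma by auto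
  obtain T' S' h where h: "{t \<in> T. \<tau> t < \<delta> powi N} \<subseteq> T'" "T' \<subseteq> T"
      "{s \<in> S. \<sigma> s < \<delta> powi N} \<subseteq> S'" "S' \<subseteq> S" "bij_betw h T' S'"
    and near: "\<And>t. t \<in> T' \<Longrightarrow> ratio_bounded (\<delta>\<^sup>2) (\<tau> t) (\<sigma> (h t))"
    by (rule near_bij_below_threshold[OF delta(1,2) tpos spos]) (use dominated in auto)
  \<comment> \<open>the unmatched elements have values in \<open>[\<delta> powi N, M]\<close>\<close>
  define c where "c = min (\<delta>\<^sup>2) (\<delta> powi N / M)"
  have c: "0 < c" "c \<le> \<delta>\<^sup>2" "c \<le> \<delta> powi N / M" using delta by (auto simp: c_def)
  have "0 < \<delta> powi N" "\<delta> powi N \<le> 1" using delta N by (auto intro: power_int_le_one)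
  then show ?thesis
    using near ratio_bounded_mono[OF c(1,2)] h(1,3) tau sigma c delta(3)
    by (intro exI[of _ c] conjI exists_padded_bij_either[OF h(5,2,4) tpos spos, where a = "\<delta> powi N" and b = M])
      force+
qed

lemma exists_ratio_bounded_bij:
  assumes delta: "0 < \<delta>" "\<delta> < 1" "0 < M"
    and tau: "\<And>t. t \<in> T \<Longrightarrow> 0 < \<tau> t \<and> \<tau> t \<le> M"
    and sigma: "\<And>s. s \<in> S \<Longrightarrow> 0 < \<sigma> s \<and> \<sigma> s \<le> M"
    and dominated: "\<forall>k::int. \<forall>l::nat. l \<ge> 1 \<longrightarrow>
         lvl \<tau> T (\<delta> powi (k + int l)) (\<delta> powi k)
           \<lesssim> lvl \<sigma> S (\<delta> powi (k + int l + 1)) (\<delta> powi (k - 1))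
       \<and> lvl \<sigma> S (\<delta> powi (k + int l)) (\<delta> powi k)
           \<lesssim> lvl \<tau> T (\<delta> powi (k + int l + 1)) (\<delta> powi (k - 1))"
  shows "\<exists>c>0. \<exists>\<eta>. bij_betw \<eta> T S \<and> (\<forall>t\<in>T. ratio_bounded c (\<tau> t) (\<sigma> (\<eta> t)))"
proof -
  have tpos: "\<forall>t\<in>T. 0 < \<tau> t" and spos: "\<forall>s\<in>S. 0 < \<sigma> s" using tau sigma by auto
  obtain T' S' h where h: "{t \<in> T. \<tau> t < \<delta> powi level \<delta> M} \<subseteq> T'" "T' \<subseteq> T"
      "{s \<in> S. \<sigma> s < \<delta> powi level \<delta> M} \<subseteq> S'" "S' \<subseteq> S" "bij_betw h T' S'"
    and near: "\<And>t. t \<in> T' \<Longrightarrow> ratio_bounded (\<delta>\<^sup>2) (\<tau> t) (\<sigma> (h t))"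
    by (rule near_bij_below_threshold[OF delta(1,2) tpos spos]) (use dominated in auto)
  have "M < \<delta> powi level \<delta> M" using powi_level_bounds(2) delta by simp
  then have "T' = T" "S' = S" using h(1-4) tau sigma by force+
  then show ?thesis using h(5) near delta(1) by (intro exI[of _ "\<delta>\<^sup>2"]) auto
qed

theorem lemma3p1:
  fixes T :: "'a set" and S :: "'b set"
    and \<tau> :: "'a \<Rightarrow> real" and \<sigma> :: "'b \<Rightarrow> real"
    and N :: int and \<delta> M :: real
  assumes N: "N \<ge> 1"
    and delta: "0 < \<delta>" "\<delta> < 1" "1 \<le> M"
    and tau: "\<And>t. t \<in> T \<Longrightarrow> 0 < \<tau> t \<and> \<tau> t \<le> M"
    and sigma: "\<And>s. s \<in> S \<Longrightarrow> 0 < \<sigma> s \<and> \<sigma> s \<le> M"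
  shows
    "((\<forall>k::int. \<forall>l::nat. k \<ge> N \<and> l \<ge> 1 \<longrightarrow>
         lvl \<tau> T (\<delta> powi (k + int l)) (\<delta> powi k)
           \<lesssim> lvl \<sigma> S (\<delta> powi (k + int l + 1)) (\<delta> powi (k - 1))
       \<and> lvl \<sigma> S (\<delta> powi (k + int l)) (\<delta> powi k)
           \<lesssim> lvl \<tau> T (\<delta> powi (k + int l + 1)) (\<delta> powi (k - 1)))
     \<longrightarrow> (\<exists>\<delta>'>0.
          (\<exists>\<eta>. bij_betw \<eta> T S \<and>
              (\<forall>t\<in>T. \<delta>' \<le> \<tau> t / \<sigma> (\<eta> t) \<and> \<tau> t / \<sigma> (\<eta> t) \<le> 1 / \<delta>'))
        \<or> (\<exists>(I::'b set) (\<eta>::'a + 'b \<Rightarrow> 'b). bij_betw \<eta> (T <+> I) S \<and>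
              (\<forall>t\<in>T <+> I. \<delta>' \<le> case_sum \<tau> (\<lambda>_. 1) t / \<sigma> (\<eta> t)
                  \<and> case_sum \<tau> (\<lambda>_. 1) t / \<sigma> (\<eta> t) \<le> 1 / \<delta>'))
        \<or> (\<exists>(I::'a set) (\<eta>::'a \<Rightarrow> 'b + 'a). bij_betw \<eta> T (S <+> I) \<and>
              (\<forall>t\<in>T. \<delta>' \<le> \<tau> t / case_sum \<sigma> (\<lambda>_. 1) (\<eta> t)
                  \<and> \<tau> t / case_sum \<sigma> (\<lambda>_. 1) (\<eta> t) \<le> 1 / \<delta>'))))
   \<and> ((\<forall>k::int. \<forall>l::nat. l \<ge> 1 \<longrightarrow>
         lvl \<tau> T (\<delta> powi (k + int l)) (\<delta> powi k)
           \<lesssim> lvl \<sigma> S (\<delta> powi (k + int l + 1)) (\<delta> powi (k - 1))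
       \<and> lvl \<sigma> S (\<delta> powi (k + int l)) (\<delta> powi k)
           \<lesssim> lvl \<tau> T (\<delta> powi (k + int l + 1)) (\<delta> powi (k - 1)))
     \<longrightarrow> (\<exists>\<delta>'>0. \<exists>\<eta>. bij_betw \<eta> T S \<and>
              (\<forall>t\<in>T. \<delta>' \<le> \<tau> t / \<sigma> (\<eta> t) \<and> \<tau> t / \<sigma> (\<eta> t) \<le> 1 / \<delta>')))"
proof -
  have "0 \<le> N" "0 < M" using N delta by simp_all
  note padded = exists_ratio_bounded_bij_with_padding[of N \<delta> M T \<tau> S \<sigma>, unfolded ratio_bounded_def]
  note exact = exists_ratio_bounded_bij[of \<delta> M T \<tau> S \<sigma>, unfolded ratio_bounded_def]
  show ?thesis
    using padded[OF \<open>0 \<le> N\<close> delta tau sigma] exact[OF delta(1,2) \<open>0 < M\<close> tau sigma]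
    by (intro conjI impI) blast+
qed

end
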